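(* Let $F$ be a field. Every almost identity PC-map $\mathrm{UT}(\infty,F)\to\mathrm{UT}(\infty,F)$ is the identity map.
   Context: $\mathrm{UT}(\infty,F)$ is the group of all $\mathbb N\times\mathbb N$ matrices over $F$ with $1$ on the diagonal and $0$ below it. $e$ is the identity, $e_{ij}$ the matrix unit, $t_{ij}(\alpha)=e+\alpha e_{ij}$ ($i<j$). $[x,y]=xyx^{-1}y^{-1}$. A PC-map is a bijection $\varphi$ of the group with $\varphi([x,y])=[\varphi(x),\varphi(y)]$ for all $x,y$; it is almost identity if $\varphi(t_{ij}(\alpha))=t_{ij}(\alpha)$ for all $i<j$, $\alpha\in F$. *)

theory Defs
  imports Main
begin

type_synonym 'a imat = "nat \<Rightarrow> nat \<Rightarrow> 'a"

definition UT :: "('a::field) imat set" where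
  "UT = {A. \<forall>i. A i i = 1 \<and> (\<forall>j<i. A i j = 0)}"

text \<open>Matrix product; for upper triangular matrices the sum over k is finite (i <= k <= j).\<close>
definition ut_mult :: "('a::field) imat \<Rightarrow> 'a imat \<Rightarrow> 'a imat" where
  "ut_mult A B = (\<lambda>i j. \<Sum>k\<in>{i..j}. A i k * B k j)"

definition ut_one :: "('a::field) imat" where
  "ut_one = (\<lambda>i j. if i = j then 1 else 0)"

definition ut_inv :: "('a::field) imat \<Rightarrow> 'a imat" where
  "ut_inv A = (THE B. B \<in> UT \<and> ut_mult A B = ut_one)"

definition ut_comm :: "('a::field) imat \<Rightarrow> 'a imat \<Rightarrow> 'a imat" where
  "ut_comm x y = ut_mult (ut_mult (ut_mult x y) (ut_inv x)) (ut_inv y)"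

definition transv :: "nat \<Rightarrow> nat \<Rightarrow> ('a::field) \<Rightarrow> 'a imat" where
  "transv i j \<alpha> = (\<lambda>k l. ut_one k l + (if k = i \<and> l = j then \<alpha> else 0))"

definition PC_map :: "(('a::field) imat \<Rightarrow> 'a imat) \<Rightarrow> bool" where
  "PC_map \<phi> \<longleftrightarrow> bij_betw \<phi> UT UT \<and>
     (\<forall>x\<in>UT. \<forall>y\<in>UT. \<phi> (ut_comm x y) = ut_comm (\<phi> x) (\<phi> y))"

definition almost_identity :: "(('a::field) imat \<Rightarrow> 'a imat) \<Rightarrow> bool" where
  "almost_identity \<phi> \<longleftrightarrow> (\<forall>i j \<alpha>. i < j \<longrightarrow> \<phi> (transv i j \<alpha>) = transv i j \<alpha>)"

end

theory Submission
  imports Defs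
begin

text \<open>Column j of [y, t_ij(1)] equals e_j - e_i + (column i of y), so an almost identity PC-map
  fixes y as soon as it fixes [y, t_ij(1)] for arbitrarily large j. For g in UT, the commutator
  [g, t_i(i+1)(1)] has trivial rows below row i, and the commutators of such matrices with
  t_ij(1), j large, are column matrices e + \<Sum>k<l d_k e_kl. Everything therefore reduces to
  column matrices. Commuting with transvections pins down all entries of the image of a column
  matrix except the corner entry (0, l). The corner is handled by induction on the support of d:
  the column matrix is written as a commutator [a, e + e_nL' + e_(n+1)L'] with a matrix a fixed
  by the map, and such a commutator does not depend on the (0, L') entry of its second factor.\<close>

definition upper_triangular :: "('a::field) imat \<Rightarrow> bool" where
  "upper_triangular A \<longleftrightarrow> (\<forall>k r. r < k \<longrightarrow> A k r = 0)"

lemma UT_upper_triangular: "A \<in> UT \<Longrightarrow> upper_triangular A"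
  by (auto simp: UT_def upper_triangular_def)

lemma UT_diag: "A \<in> UT \<Longrightarrow> A i i = 1"
  by (auto simp: UT_def)

lemma UT_below_diag: "A \<in> UT \<Longrightarrow> r < k \<Longrightarrow> A k r = 0"
  by (auto simp: UT_def)

lemma ut_mult_eq_sum_atMost:
  assumes "upper_triangular A" "upper_triangular B" "r \<le> N"
  shows "ut_mult A B k r = (\<Sum>m\<le>N. A k m * B m r)"
proof -
  have "ut_mult A B k r = (\<Sum>m\<in>{k..r}. A k m * B m r)" by (simp add: ut_mult_def)
  also have "\<dots> = (\<Sum>m\<le>N. A k m * B m r)"
  proof (rule sum.mono_neutral_left)
    show "\<forall>i\<in>{..N} - {k..r}. A k i * B i r = 0"
      using assms by (auto simp: upper_triangular_def not_le)
  qed (use assms in auto)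
  finally show ?thesis .
qed

lemma upper_triangular_ut_mult:
  "upper_triangular A \<Longrightarrow> upper_triangular B \<Longrightarrow> upper_triangular (ut_mult A B)"
  by (auto simp: upper_triangular_def ut_mult_def)

lemma ut_mult_in_UT: "A \<in> UT \<Longrightarrow> B \<in> UT \<Longrightarrow> ut_mult A B \<in> UT"
  by (auto simp: UT_def ut_mult_def)

lemma ut_mult_assoc:
  assumes "upper_triangular A" "upper_triangular B" "upper_triangular C"
  shows "ut_mult (ut_mult A B) C = ut_mult A (ut_mult B C)"
proof (intro ext)
  fix k r
  have "ut_mult (ut_mult A B) C k r = (\<Sum>m\<le>r. (\<Sum>p\<le>r. A k p * B p m) * C m r)"
    unfolding ut_mult_eq_sum_atMost[OF upper_triangular_ut_mult[OF assms(1,2)] assms(3) order_refl]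
    using ut_mult_eq_sum_atMost[OF assms(1,2)] by (intro sum.cong) auto
  also have "\<dots> = (\<Sum>p\<le>r. \<Sum>m\<le>r. A k p * (B p m * C m r))"
    by (subst sum.swap) (simp add: sum_distrib_right mult.assoc)
  also have "\<dots> = ut_mult A (ut_mult B C) k r"
    unfolding ut_mult_eq_sum_atMost[OF assms(1) upper_triangular_ut_mult[OF assms(2,3)] order_refl]
    using ut_mult_eq_sum_atMost[OF assms(2,3) order_refl] by (simp add: sum_distrib_left)
  finally show "ut_mult (ut_mult A B) C k r = ut_mult A (ut_mult B C) k r" .
qed

lemma ut_one_in_UT: "ut_one \<in> UT"
  by (simp add: UT_def ut_one_def)

lemma ut_mult_one_right: "upper_triangular A \<Longrightarrow> ut_mult A ut_one = A"
proof (intro ext)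
  fix k r assume A: "upper_triangular A"
  show "ut_mult A ut_one k r = A k r"
  proof (cases "k \<le> r")
    case True
    have "ut_mult A ut_one k r = (\<Sum>m\<in>{k..r}. (if r = m then A k r else 0))"
      unfolding ut_mult_def ut_one_def by (rule sum.cong) auto
    then show ?thesis using True by simp
  qed (use A in \<open>auto simp: ut_mult_def upper_triangular_def\<close>)
qed

text \<open>The witness for the description in ut_inv: back substitution along each column.\<close>

function ut_rinv :: "('a::field) imat \<Rightarrow> nat \<Rightarrow> nat \<Rightarrow> 'a" where
  "ut_rinv A i j = (if j < i then 0 else if i = j then 1
     else - (\<Sum>k\<in>{Suc i..j}. A i k * ut_rinv A k j))"
  by auto
termination by (relation "measure (\<lambda>(A, i, j). j - i)") auto

declare ut_rinv.simps[simp del]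

lemma ut_rinv_in_UT: "ut_rinv A \<in> UT"
  by (auto simp: UT_def ut_rinv.simps)

lemma ut_mult_rinv: assumes "A \<in> UT" shows "ut_mult A (ut_rinv A) = ut_one"
proof (intro ext)
  fix i j
  show "ut_mult A (ut_rinv A) i j = ut_one i j"
  proof (cases "i < j")
    case True
    have "{i..j} = insert i {Suc i..j}" using True by auto
    then have "ut_mult A (ut_rinv A) i j
        = A i i * ut_rinv A i j + (\<Sum>k\<in>{Suc i..j}. A i k * ut_rinv A k j)"
      by (simp add: ut_mult_def)
    also have "\<dots> = 0" using True UT_diag[OF assms, of i] by (subst (1) ut_rinv.simps) simp
    finally show ?thesis using True by (simp add: ut_one_def)
  next
    case False
    then show ?thesis using UT_diag[OF assms, of i]
      by (cases "i = j") (auto simp: ut_mult_def ut_one_def ut_rinv.simps)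
  qed
qed

lemma ut_right_inverse_unique:
  assumes A: "A \<in> UT" and "B \<in> UT" "C \<in> UT"
    and AB: "ut_mult A B = ut_one" and AC: "ut_mult A C = ut_one"
  shows "B = C"
proof (intro ext)
  fix k j
  show "B k j = C k j"
  proof (induction "j - k" arbitrary: k rule: less_induct)
    case less
    show ?case
    proof (cases "k < j")
      case False
      then show ?thesis using \<open>B \<in> UT\<close> \<open>C \<in> UT\<close> UT_diag UT_below_diag
        by (metis linorder_neqE_nat)
    next
      case True
      have "{k..j} = insert k {Suc k..j}" using True by auto
      then have row: "ut_mult A X k j = X k j + (\<Sum>m\<in>{Suc k..j}. A k m * X m j)" for X
        using UT_diag[OF A, of k] by (simp add: ut_mult_def)
      have "(\<Sum>m\<in>{Suc k..j}. A k m * B m j) = (\<Sum>m\<in>{Suc k..j}. A k m * C m j)"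
        using less by (intro sum.cong) auto
      then show ?thesis using row[of B] row[of C] AB AC by simp
    qed
  qed
qed

lemma ut_inv_eq_rinv: "A \<in> UT \<Longrightarrow> ut_inv A = ut_rinv A"
  unfolding ut_inv_def
  by (rule the_equality)
     (auto simp: ut_rinv_in_UT ut_mult_rinv intro: ut_right_inverse_unique[OF _ _ ut_rinv_in_UT])

lemma ut_inv_in_UT: "A \<in> UT \<Longrightarrow> ut_inv A \<in> UT"
  by (simp add: ut_inv_eq_rinv ut_rinv_in_UT)

lemma ut_mult_inv_right: "A \<in> UT \<Longrightarrow> ut_mult A (ut_inv A) = ut_one"
  by (simp add: ut_inv_eq_rinv ut_mult_rinv)

lemma ut_inv_unique: "A \<in> UT \<Longrightarrow> B \<in> UT \<Longrightarrow> ut_mult A B = ut_one \<Longrightarrow> ut_inv A = B"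
  using ut_right_inverse_unique[of A "ut_inv A" B] ut_inv_in_UT ut_mult_inv_right by blast

lemma ut_comm_in_UT: "x \<in> UT \<Longrightarrow> y \<in> UT \<Longrightarrow> ut_comm x y \<in> UT"
  by (simp add: ut_comm_def ut_mult_in_UT ut_inv_in_UT)

lemma ut_comm_self: assumes x: "x \<in> UT" shows "ut_comm x x = ut_one"
proof -
  have ux: "upper_triangular x" and ui: "upper_triangular (ut_inv x)"
    using x ut_inv_in_UT UT_upper_triangular by blast+
  have "ut_mult (ut_mult x x) (ut_inv x) = x"
    using ut_mult_assoc[OF ux ux ui] ut_mult_inv_right[OF x] ut_mult_one_right[OF ux] by simp
  then show ?thesis by (simp add: ut_comm_def ut_mult_inv_right[OF x])
qed

definition col_matrix :: "nat \<Rightarrow> (nat \<Rightarrow> 'a) \<Rightarrow> ('a::field) imat" where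
  "col_matrix l d = (\<lambda>k r. ut_one k r + (if r = l \<and> k < l then d k else 0))"

lemma col_matrix_in_UT: "col_matrix l d \<in> UT"
  by (auto simp: UT_def col_matrix_def ut_one_def)

lemma col_matrix_cong: "(\<And>k. k < l \<Longrightarrow> d k = d' k) \<Longrightarrow> col_matrix l d = col_matrix l d'"
  by (auto simp: col_matrix_def intro!: ext)

lemma col_matrix_entry: "k < l \<Longrightarrow> col_matrix l d k l = d k"
  by (simp add: col_matrix_def ut_one_def)

lemma col_matrix_zero: "col_matrix l (\<lambda>_. 0) = ut_one"
  by (auto simp: col_matrix_def intro!: ext)

lemma transv_eq_col_matrix:
  "i < j \<Longrightarrow> transv i j \<alpha> = col_matrix j (\<lambda>k. if k = i then \<alpha> else 0)"
  by (auto simp: transv_def col_matrix_def intro!: ext)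

lemma transv_in_UT: "i < j \<Longrightarrow> transv i j \<alpha> \<in> UT"
  by (simp add: transv_eq_col_matrix col_matrix_in_UT)

lemma sum_lessThan_delta_mult:
  "(i::nat) < j \<Longrightarrow> (\<Sum>m<j. (f m::'a::field) * (if m = i then 1 else 0)) = f i"
  by (simp add: if_distrib[of "(*) _"] cong: if_cong)

lemma ut_mult_col_matrix:
  assumes "upper_triangular X"
  shows "ut_mult X (col_matrix l d) k r = X k r + (if r = l then (\<Sum>m<l. X k m * d m) else 0)"
proof -
  have "X k m * col_matrix l d m r
      = (if m = r then X k r else 0) + (if r = l \<and> m < l then X k m * d m else 0)" for m
    by (auto simp: col_matrix_def ut_one_def distrib_left)
  then have "ut_mult X (col_matrix l d) k r
      = (\<Sum>m\<le>r. (if m = r then X k r else 0))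
        + (\<Sum>m\<le>r. (if r = l \<and> m < l then X k m * d m else 0))"
    by (simp add: ut_mult_eq_sum_atMost[OF assms UT_upper_triangular[OF col_matrix_in_UT] order_refl]
        sum.distrib)
  also have "\<dots> = X k r + (if r = l then (\<Sum>m<l. X k m * d m) else 0)"
    by (cases "r = l") (simp_all add: lessThan_Suc_atMost[symmetric])
  finally show ?thesis .
qed

lemma ut_mult_add_column:
  assumes "upper_triangular A" "upper_triangular B"
    and Y: "upper_triangular Y" "Y = (\<lambda>k r. A k r + (if r = l then s k else 0))"
  shows "ut_mult Y B k r = ut_mult A B k r + s k * B l r"
proof -
  have "Y k m * B m r = A k m * B m r + (if m = l then s k * B l r else 0)" for m
    by (auto simp: Y(2) distrib_right)
  then show ?thesis
    by (simp add: ut_mult_eq_sum_atMost[OF Y(1) assms(2), of r "r + l"]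
        ut_mult_eq_sum_atMost[OF assms(1,2), of r "r + l"] sum.distrib)
qed

lemma ut_inv_col_matrix: "ut_inv (col_matrix l d) = col_matrix l (\<lambda>k. - d k)"
proof (rule ut_inv_unique[OF col_matrix_in_UT col_matrix_in_UT], intro ext)
  fix k r
  have "(\<Sum>m<l. col_matrix l d k m * - d m) = (\<Sum>m<l. (if m = k then - d k else 0))"
    by (rule sum.cong) (auto simp: col_matrix_def ut_one_def)
  then show "ut_mult (col_matrix l d) (col_matrix l (\<lambda>k. - d k)) k r = ut_one k r"
    by (simp add: ut_mult_col_matrix[OF UT_upper_triangular[OF col_matrix_in_UT]])
       (simp add: col_matrix_def)
qed

lemma ut_comm_col_matrix:
  assumes a: "a \<in> UT"
  shows "ut_comm a (col_matrix l d) = (\<lambda>k r. ut_one k r - (if r = l \<and> k < l then d k else 0)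
            + (\<Sum>m<l. a k m * d m) * ut_inv a l r)"
proof (intro ext)
  fix k r
  let ?s = "\<lambda>k. (\<Sum>m<l. a k m * d m)"
  let ?P = "ut_mult (ut_mult a (col_matrix l d)) (ut_inv a)"
  have ua: "upper_triangular a" and ui: "upper_triangular (ut_inv a)"
    and uc: "upper_triangular (col_matrix l d)"
    using a ut_inv_in_UT col_matrix_in_UT UT_upper_triangular by blast+
  have uP: "upper_triangular ?P" using ua ui uc by (intro upper_triangular_ut_mult)
  have "ut_mult a (col_matrix l d) = (\<lambda>k r. a k r + (if r = l then ?s k else 0))"
    by (intro ext) (simp add: ut_mult_col_matrix[OF ua])
  then have P: "?P = (\<lambda>k r. ut_one k r + ?s k * ut_inv a l r)"
    using ut_mult_add_column[OF ua ui upper_triangular_ut_mult[OF ua uc]] ut_mult_inv_right[OF a]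
    by (intro ext) simp
  have "(\<Sum>m<l. ?P k m * - d m) = (\<Sum>m<l. (if m = k then - d k else 0))"
    unfolding P using UT_below_diag[OF ut_inv_in_UT[OF a]] by (intro sum.cong) (auto simp: ut_one_def)
  then have "ut_mult ?P (col_matrix l (\<lambda>k. - d k)) k r
      = ?P k r + (if r = l then (if k < l then - d k else 0) else 0)"
    by (simp add: ut_mult_col_matrix[OF uP])
  then show "ut_comm a (col_matrix l d) k r
      = ut_one k r - (if r = l \<and> k < l then d k else 0) + ?s k * ut_inv a l r"
    by (simp add: ut_comm_def ut_inv_col_matrix P)
qed

lemma ut_inv_trivial_row:
  assumes a: "a \<in> UT" and row: "\<And>r. a l r = ut_one l r"
  shows "ut_inv a l r = ut_one l r"
proof (cases "l \<le> r")
  case True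
  have "ut_mult a (ut_inv a) l r = (\<Sum>m\<in>{l..r}. (if m = l then ut_inv a l r else 0))"
    unfolding ut_mult_def by (rule sum.cong) (auto simp: row ut_one_def)
  then show ?thesis using True ut_mult_inv_right[OF a] by simp
next
  case False
  then show ?thesis using UT_below_diag[OF ut_inv_in_UT[OF a]] by (simp add: ut_one_def)
qed

lemma ut_comm_col_matrix_trivial_row:
  assumes a: "a \<in> UT" and row: "\<And>r. a l r = ut_one l r"
  shows "ut_comm a (col_matrix l d) = col_matrix l (\<lambda>k. (\<Sum>m<l. a k m * d m) - d k)"
proof (intro ext)
  fix k r
  have "(\<Sum>m<l. a k m * d m) = 0" if "l \<le> k"
    using UT_below_diag[OF a] that by (intro sum.neutral) auto
  then show "ut_comm a (col_matrix l d) k r = col_matrix l (\<lambda>k. (\<Sum>m<l. a k m * d m) - d k) k r"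
    unfolding ut_comm_col_matrix[OF a] ut_inv_trivial_row[OF a row]
    by (auto simp: col_matrix_def ut_one_def)
qed

text \<open>The entry d 0 only meets the first column of a, which is that of the identity.\<close>

lemma ut_comm_col_matrix_upd_zero:
  assumes a: "a \<in> UT" and row: "\<And>r. a l r = ut_one l r"
  shows "ut_comm a (col_matrix l (d(0 := c))) = ut_comm a (col_matrix l d)"
proof -
  have "(\<Sum>m<l. a k m * (d(0 := c)) m) - (d(0 := c)) k = (\<Sum>m<l. a k m * d m) - d k"
    if "k < l" for k
  proof -
    have "(\<Sum>m<l. a k m * (d(0 := c)) m)
        = (\<Sum>m<l. a k m * d m + (if m = 0 then a k 0 * (c - d 0) else 0))"
      by (intro sum.cong) (auto simp: algebra_simps)
    also have "\<dots> = (\<Sum>m<l. a k m * d m) + a k 0 * (c - d 0)"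
      using that by (simp add: sum.distrib)
    finally show ?thesis
      using UT_diag[OF a, of 0] UT_below_diag[OF a, of 0 k] by (cases "k = 0") auto
  qed
  then show ?thesis
    unfolding ut_comm_col_matrix_trivial_row[OF a row] by (rule col_matrix_cong)
qed

lemma ut_comm_transv:
  assumes a: "a \<in> UT" and row: "\<And>r. a j r = ut_one j r" and ij: "i < j"
  shows "ut_comm a (transv i j 1) = col_matrix j (\<lambda>k. a k i - ut_one k i)"
  unfolding transv_eq_col_matrix[OF ij] ut_comm_col_matrix_trivial_row[OF a row]
  by (rule col_matrix_cong) (simp add: sum_lessThan_delta_mult ij ut_one_def)

lemma ut_comm_col_matrix_transv_shift:
  assumes "L < L'" and "\<And>k. L \<le> k \<Longrightarrow> d k = 0"
  shows "ut_comm (col_matrix L d) (transv L L' 1) = col_matrix L' d"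
proof -
  have "col_matrix L d L' r = ut_one L' r" for r using assms(1) by (simp add: col_matrix_def)
  then have "ut_comm (col_matrix L d) (transv L L' 1)
      = col_matrix L' (\<lambda>k. col_matrix L d k L - ut_one k L)"
    by (rule ut_comm_transv[OF col_matrix_in_UT _ assms(1)])
  also have "\<dots> = col_matrix L' d"
    using assms(2) by (intro col_matrix_cong) (auto simp: col_matrix_def ut_one_def)
  finally show ?thesis .
qed

lemma ut_comm_transv_entry:
  assumes y: "y \<in> UT" and ij: "i < j"
  shows "ut_comm y (transv i j 1) k j = ut_one k j - (if k = i then 1 else 0) + y k i"
  using ij UT_diag[OF ut_inv_in_UT[OF y]]
  by (simp add: transv_eq_col_matrix ut_comm_col_matrix[OF y] sum_lessThan_delta_mult)

lemma ut_comm_transv_trivial_rows: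
  assumes g: "g \<in> UT" and "i < j" "i < k"
  shows "ut_comm g (transv i j 1) k r = ut_one k r"
  using assms UT_below_diag[OF g, of i k]
  by (simp add: transv_eq_col_matrix ut_comm_col_matrix[OF g] sum_lessThan_delta_mult)

lemma ut_comm_transv_col_matrix:
  assumes "0 < k0" "k0 < l"
  shows "ut_comm (transv 0 k0 1) (col_matrix l d) = transv 0 l (d k0)"
proof -
  have row: "transv 0 k0 1 l r = ut_one l r" for r
    using assms by (simp add: transv_def)
  have "(\<Sum>m<l. transv 0 k0 1 k m * d m)
      = (\<Sum>m<l. (if m = k then d k else 0) + (if k = 0 \<and> m = k0 then d k0 else 0))" for k
    by (rule sum.cong) (use assms in \<open>auto simp: transv_def ut_one_def\<close>)
  then have "(\<Sum>m<l. transv 0 k0 1 k m * d m) = (if k < l then d k else 0) + (if k = 0 then d k0 else 0)"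
    for k using assms by (simp add: sum.distrib)
  then show ?thesis
    unfolding ut_comm_col_matrix_trivial_row[OF transv_in_UT[OF assms(1)] row]
      transv_eq_col_matrix[OF order.strict_trans[OF assms]]
    by (intro col_matrix_cong) simp
qed

definition two_col_matrix :: "nat \<Rightarrow> (nat \<Rightarrow> 'a) \<Rightarrow> nat \<Rightarrow> (nat \<Rightarrow> 'a) \<Rightarrow> ('a::field) imat" where
  "two_col_matrix p u q v = (\<lambda>k r. ut_one k r + (if r = p \<and> k < p then u k else 0)
                                              + (if r = q \<and> k < q then v k else 0))"

lemma two_col_matrix_in_UT: "two_col_matrix p u q v \<in> UT"
  by (auto simp: UT_def two_col_matrix_def ut_one_def)

lemma two_col_matrix_trivial_rows: "max p q \<le> k \<Longrightarrow> two_col_matrix p u q v k r = ut_one k r"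
  by (simp add: two_col_matrix_def)

lemma ut_comm_two_col_matrix:
  assumes "p \<noteq> q" "p < L" "q < L"
  shows "ut_comm (two_col_matrix p u q v) (col_matrix L (\<lambda>m. if m = p \<or> m = q then 1 else 0))
    = col_matrix L (\<lambda>k. (if k < p then u k else 0) + (if k < q then v k else 0))"
proof -
  let ?a = "two_col_matrix p u q v" and ?w = "\<lambda>m. if m = p \<or> m = q then 1 else 0"
  have row: "?a L r = ut_one L r" for r
    using assms by (intro two_col_matrix_trivial_rows) simp
  have "(\<Sum>m<L. ?a k m * ?w m) = (\<Sum>m<L. (if m = p then ?a k m else 0) + (if m = q then ?a k m else 0))"
    for k using assms(1) by (intro sum.cong) auto
  then have "(\<Sum>m<L. ?a k m * ?w m) - ?w k = (if k < p then u k else 0) + (if k < q then v k else 0)"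
    for k using assms by (auto simp: sum.distrib two_col_matrix_def ut_one_def)
  then show ?thesis
    unfolding ut_comm_col_matrix_trivial_row[OF two_col_matrix_in_UT row] by (intro col_matrix_cong) simp
qed

locale almost_identity_PC_map =
  fixes \<phi> :: "('a::field) imat \<Rightarrow> 'a imat"
  assumes PC: "PC_map \<phi>" and almost_id: "almost_identity \<phi>"
begin

lemma map_in_UT: "x \<in> UT \<Longrightarrow> \<phi> x \<in> UT"
  using PC by (auto simp: PC_map_def bij_betw_def)

lemma map_ut_comm: "x \<in> UT \<Longrightarrow> y \<in> UT \<Longrightarrow> \<phi> (ut_comm x y) = ut_comm (\<phi> x) (\<phi> y)"
  using PC by (auto simp: PC_map_def)

lemma map_ut_one: "\<phi> ut_one = ut_one"
  by (metis map_ut_comm ut_comm_self map_in_UT ut_one_in_UT)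

lemma map_transv: "i < j \<Longrightarrow> \<phi> (transv i j \<alpha>) = transv i j \<alpha>"
  using almost_id by (simp add: almost_identity_def)

lemma map_comm_transv:
  "x \<in> UT \<Longrightarrow> i < j \<Longrightarrow> \<phi> (ut_comm x (transv i j 1)) = ut_comm (\<phi> x) (transv i j 1)"
  by (simp add: map_ut_comm transv_in_UT map_transv)

lemma map_fixed_if_comm_transv_fixed:
  assumes x: "x \<in> UT"
    and fixed: "\<And>i. \<exists>j>i. \<phi> (ut_comm x (transv i j 1)) = ut_comm x (transv i j 1)"
  shows "\<phi> x = x"
proof (intro ext)
  fix k i
  obtain j where ij: "i < j" and "\<phi> (ut_comm x (transv i j 1)) = ut_comm x (transv i j 1)"
    using fixed by blast
  then have "ut_comm (\<phi> x) (transv i j 1) k j = ut_comm x (transv i j 1) k j"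
    using map_comm_transv[OF x ij] by simp
  then show "\<phi> x k i = x k i"
    using ut_comm_transv_entry[OF map_in_UT[OF x] ij] ut_comm_transv_entry[OF x ij] by simp
qed

lemma map_fixed_if_columns_fixed:
  assumes h: "h \<in> UT" and rows: "\<And>k r. N \<le> k \<Longrightarrow> h k r = ut_one k r"
    and columns: "\<And>i j. N \<le> j \<Longrightarrow> i < j \<Longrightarrow>
      \<phi> (col_matrix j (\<lambda>k. h k i - ut_one k i)) = col_matrix j (\<lambda>k. h k i - ut_one k i)"
  shows "\<phi> h = h"
proof (rule map_fixed_if_comm_transv_fixed[OF h])
  fix i
  define j where "j = Suc (max i N)"
  have "i < j" "N \<le> j" by (auto simp: j_def)
  then show "\<exists>j>i. \<phi> (ut_comm h (transv i j 1)) = ut_comm h (transv i j 1)"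
    using ut_comm_transv[OF h rows] columns by auto
qed

lemma map_col_matrix_off_column:
  assumes "i \<noteq> l"
  shows "\<phi> (col_matrix l d) k i = ut_one k i"
proof -
  let ?h = "col_matrix l d"
  define j where "j = Suc (max i l)"
  have ij: "i < j" and lj: "l < j" by (auto simp: j_def)
  have "?h j r = ut_one j r" for r using lj by (simp add: col_matrix_def)
  then have "ut_comm ?h (transv i j 1) = col_matrix j (\<lambda>k. ?h k i - ut_one k i)"
    by (rule ut_comm_transv[OF col_matrix_in_UT _ ij])
  also have "\<dots> = col_matrix j (\<lambda>_. 0)"
    using assms by (intro col_matrix_cong) (simp add: col_matrix_def)
  finally have "ut_comm ?h (transv i j 1) = col_matrix j (\<lambda>_. 0)" .
  then have "ut_comm (\<phi> ?h) (transv i j 1) = ut_one"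
    using map_comm_transv[OF col_matrix_in_UT ij, of l d] map_ut_one by (simp add: col_matrix_zero)
  then show ?thesis
    using ut_comm_transv_entry[OF map_in_UT[OF col_matrix_in_UT] ij, of l d k] by (simp add: ut_one_def)
qed

lemma map_col_matrix_upd_zero: "\<exists>c. \<phi> (col_matrix l d) = col_matrix l (d(0 := c))"
proof -
  let ?h = "col_matrix l d" let ?y = "\<phi> ?h"
  have y: "?y \<in> UT" by (rule map_in_UT[OF col_matrix_in_UT])
  have y_col: "?y = col_matrix l (\<lambda>k. ?y k l)"
  proof (intro ext)
    fix k r show "?y k r = col_matrix l (\<lambda>k. ?y k l) k r"
      using map_col_matrix_off_column[of r l d k] UT_diag[OF y, of l] UT_below_diag[OF y, of l k]
      by (cases "r = l"; cases k l rule: linorder_cases) (auto simp: col_matrix_def ut_one_def)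
  qed
  have "?y k l = d k" if "0 < k" "k < l" for k
  proof -
    have "transv 0 l (d k) = \<phi> (ut_comm (transv 0 k 1) ?h)"
      using map_transv[of 0 l "d k"] that by (simp add: ut_comm_transv_col_matrix[OF that])
    also have "\<dots> = ut_comm (transv 0 k 1) ?y"
      using map_ut_comm[OF transv_in_UT[OF that(1)] col_matrix_in_UT] map_transv[OF that(1)] by simp
    also have "\<dots> = ut_comm (transv 0 k 1) (col_matrix l (\<lambda>k. ?y k l))"
      using y_col by (rule arg_cong)
    also have "\<dots> = transv 0 l (?y k l)"
      by (rule ut_comm_transv_col_matrix[OF that])
    finally have "transv 0 l (d k) 0 l = transv 0 l (?y k l) 0 l" by simp
    then show ?thesis using that by (simp add: transv_def ut_one_def)
  qed
  then have "col_matrix l (\<lambda>k. ?y k l) = col_matrix l (d(0 := ?y 0 l))"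
    by (intro col_matrix_cong) simp
  with y_col have "?y = col_matrix l (d(0 := ?y 0 l))" by (rule trans)
  then show ?thesis by blast
qed

lemma map_fixes_comm_col_matrix:
  assumes a: "a \<in> UT" "\<phi> a = a" and row: "\<And>r. a l r = ut_one l r"
  shows "\<phi> (ut_comm a (col_matrix l w)) = ut_comm a (col_matrix l w)"
proof -
  obtain c where "\<phi> (col_matrix l w) = col_matrix l (w(0 := c))"
    using map_col_matrix_upd_zero by blast
  then show ?thesis
    using map_ut_comm[OF a(1) col_matrix_in_UT] a(2) ut_comm_col_matrix_upd_zero[OF a(1) row] by simp
qed

lemma map_fixes_col_matrix_shift:
  assumes "0 < L" "L < L'" and d: "\<And>k. L \<le> k \<Longrightarrow> d k = 0"
    and fixed: "\<phi> (col_matrix L' d) = col_matrix L' d"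
  shows "\<phi> (col_matrix L d) = col_matrix L d"
proof -
  obtain c where c: "\<phi> (col_matrix L d) = col_matrix L (d(0 := c))"
    using map_col_matrix_upd_zero by blast
  have "col_matrix L' (d(0 := c)) = col_matrix L' d"
    using map_comm_transv[OF col_matrix_in_UT \<open>L < L'\<close>, of L d] c fixed d \<open>0 < L\<close>
      ut_comm_col_matrix_transv_shift[OF \<open>L < L'\<close>, of d]
      ut_comm_col_matrix_transv_shift[OF \<open>L < L'\<close>, of "d(0 := c)"] by simp
  then have "c = d 0"
    using col_matrix_entry[of 0 L' "d(0 := c)"] col_matrix_entry[of 0 L' d] assms(1,2) by simp
  then show ?thesis using c by simp
qed

lemma map_fixes_two_col_matrix:
  assumes "p \<noteq> q" and u: "\<And>k. p \<le> k \<Longrightarrow> u k = 0" and v: "\<And>k. q \<le> k \<Longrightarrow> v k = 0"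
    and u_fixed: "\<And>j. max p q \<le> j \<Longrightarrow> \<phi> (col_matrix j u) = col_matrix j u"
    and v_fixed: "\<And>j. max p q \<le> j \<Longrightarrow> \<phi> (col_matrix j v) = col_matrix j v"
  shows "\<phi> (two_col_matrix p u q v) = two_col_matrix p u q v"
proof (rule map_fixed_if_columns_fixed[OF two_col_matrix_in_UT two_col_matrix_trivial_rows])
  fix i j
  let ?col = "\<lambda>k. two_col_matrix p u q v k i - ut_one k i"
  assume "max p q \<le> j"
  consider "i = p" | "i = q" | "i \<noteq> p" "i \<noteq> q" by blast
  then show "\<phi> (col_matrix j ?col) = col_matrix j ?col"
  proof cases
    case 1
    then have "?col = u" using \<open>p \<noteq> q\<close> u by (auto simp: two_col_matrix_def not_less)
    then show ?thesis using u_fixed[OF \<open>max p q \<le> j\<close>] by simp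
  next
    case 2
    then have "?col = v" using \<open>p \<noteq> q\<close> v by (auto simp: two_col_matrix_def not_less)
    then show ?thesis using v_fixed[OF \<open>max p q \<le> j\<close>] by simp
  next
    case 3
    then have "?col = (\<lambda>_. 0)" by (auto simp: two_col_matrix_def)
    then show ?thesis by (simp add: col_matrix_zero map_ut_one)
  qed
qed

lemma map_fixes_col_matrix_support:
  assumes "n \<le> L" and "\<And>k. n \<le> k \<Longrightarrow> d k = 0"
  shows "\<phi> (col_matrix L d) = col_matrix L d"
  using assms
proof (induction n arbitrary: L d)
  case 0
  then have "d = (\<lambda>_. 0)" by auto
  then show ?case by (simp add: col_matrix_zero map_ut_one)
next
  case (Suc n)
  define c where "c = (\<lambda>k. if k < n then d k else 0)"
  define v where "v = (\<lambda>k. if k = n then d n else 0)"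
  let ?a = "two_col_matrix n c (Suc n) v"
  have "\<phi> ?a = ?a"
  proof (rule map_fixes_two_col_matrix)
    fix j assume "max n (Suc n) \<le> j"
    then have "n < j" by simp
    show "\<phi> (col_matrix j c) = col_matrix j c"
      using Suc.IH[of j c] \<open>n < j\<close> by (simp add: c_def)
    have "col_matrix j v = transv n j (d n)"
      by (simp add: transv_eq_col_matrix[OF \<open>n < j\<close>] v_def)
    then show "\<phi> (col_matrix j v) = col_matrix j v" using map_transv[OF \<open>n < j\<close>] by simp
  qed (auto simp: c_def v_def)
  moreover have "?a (Suc L) r = ut_one (Suc L) r" for r
    using Suc.prems(1) by (intro two_col_matrix_trivial_rows) simp
  moreover have "ut_comm ?a (col_matrix (Suc L) (\<lambda>m. if m = n \<or> m = Suc n then 1 else 0))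
      = col_matrix (Suc L) d"
  proof -
    have "ut_comm ?a (col_matrix (Suc L) (\<lambda>m. if m = n \<or> m = Suc n then 1 else 0))
        = col_matrix (Suc L) (\<lambda>k. (if k < n then c k else 0) + (if k < Suc n then v k else 0))"
      using Suc.prems(1) by (intro ut_comm_two_col_matrix) auto
    also have "\<dots> = col_matrix (Suc L) d"
      using Suc.prems(2) by (intro col_matrix_cong) (auto simp: c_def v_def)
    finally show ?thesis .
  qed
  ultimately have "\<phi> (col_matrix (Suc L) d) = col_matrix (Suc L) d"
    using map_fixes_comm_col_matrix[OF two_col_matrix_in_UT] by metis
  then show ?case
    using map_fixes_col_matrix_shift[of L "Suc L" d] Suc.prems by simp
qed

lemma map_fixes_col_matrix: "\<phi> (col_matrix L d) = col_matrix L d"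
proof -
  have "col_matrix L d = col_matrix L (\<lambda>k. if k < L then d k else 0)"
    by (rule col_matrix_cong) simp
  then show ?thesis using map_fixes_col_matrix_support[of L L] by simp
qed

lemma map_fixes_trivial_rows:
  assumes "h \<in> UT" "\<And>k r. N \<le> k \<Longrightarrow> h k r = ut_one k r"
  shows "\<phi> h = h"
  using map_fixed_if_columns_fixed[OF assms] map_fixes_col_matrix by blast

lemma map_fixes_UT: assumes g: "g \<in> UT" shows "\<phi> g = g"
proof (rule map_fixed_if_comm_transv_fixed[OF g])
  fix i
  have "\<phi> (ut_comm g (transv i (Suc i) 1)) = ut_comm g (transv i (Suc i) 1)"
    using ut_comm_in_UT[OF g transv_in_UT] ut_comm_transv_trivial_rows[OF g]
    by (intro map_fixes_trivial_rows[of _ "Suc i"]) auto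
  then show "\<exists>j>i. \<phi> (ut_comm g (transv i j 1)) = ut_comm g (transv i j 1)" by blast
qed

end

theorem mainTheorem6:
  fixes \<phi> :: "('a::field) imat \<Rightarrow> 'a imat"
  assumes "PC_map \<phi>" and "almost_identity \<phi>"
  shows "\<forall>x\<in>UT. \<phi> x = x"
proof -
  interpret almost_identity_PC_map \<phi> using assms by unfold_locales
  show ?thesis using map_fixes_UT by blast
qed

end
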